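(* Let $A=\mathbb{Z}_2^n\times\mathbb{Z}_4\times A_{2'}$, where $n\ge 1$ and $A_{2'}$ is a finite abelian group of odd order. Then a subgroup $H$ of $A$ is a subgroup perfect code of $A$ if and only if $H$ is neither of the form $\{0\}^n\times\{0,2\}\times A'$ with $A'$ a proper subgroup of $A_{2'}$, nor of the form $\{0\}^n\times\{0\}\times A''$ with $A''$ a subgroup of $A_{2'}$.
   Context: Groups are written additively with identity $0$. An element $x\in A$ is a square if $x=2y$ for some $y\in A$; a subset is square-free if it contains no squares. For a square-free $T\subseteq A$, the Cayley sum graph $\mathrm{CayS}(A,T)$ is the simple graph with vertex set $A$ in which distinct $x,y$ are adjacent iff $x+y\in T$. A subset $C$ of the vertex set of a graph is a perfect code if every vertex is at distance at most one from exactly one vertex of $C$. A subgroup $H$ of $A$ is a subgroup perfect code of $A$ if $H$ is a perfect code of $\mathrm{CayS}(A,T)$ for some square-free $T\subseteq A$ (the empty set allowed). *)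

theory Defs
  imports "HOL-Analysis.Analysis" "HOL-Library.Numeral_Type"
begin

text \<open>Additive (abelian) groups are modelled by types of class ab_group_add;
  the whole type is the group.\<close>

definition add_subgroup :: "'a::ab_group_add set \<Rightarrow> bool" where
  "add_subgroup H \<longleftrightarrow> 0 \<in> H \<and> (\<forall>x\<in>H. \<forall>y\<in>H. x + y \<in> H) \<and> (\<forall>x\<in>H. - x \<in> H)"

definition is_square :: "'a::ab_group_add \<Rightarrow> bool" where
  "is_square x \<longleftrightarrow> (\<exists>y. x = y + y)"

abbreviation square_free :: "'a::ab_group_add set \<Rightarrow> bool" where
  "square_free T \<equiv> (\<forall>x\<in>T. \<not> is_square x)"

definition cays_adj :: "'a::ab_group_add set \<Rightarrow> 'a \<Rightarrow> 'a \<Rightarrow> bool" where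
  "cays_adj T x y \<longleftrightarrow> x \<noteq> y \<and> x + y \<in> T"

definition perfect_code :: "'v set \<Rightarrow> ('v \<Rightarrow> 'v \<Rightarrow> bool) \<Rightarrow> 'v set \<Rightarrow> bool" where
  "perfect_code V adj C \<longleftrightarrow> C \<subseteq> V \<and> (\<forall>v\<in>V. \<exists>!c. c \<in> C \<and> (v = c \<or> adj v c))"

definition subgroup_perfect_code :: "'a::ab_group_add set \<Rightarrow> bool" where
  "subgroup_perfect_code H \<longleftrightarrow> add_subgroup H \<and>
     (\<exists>T. square_free T \<and> perfect_code UNIV (cays_adj T) H)"

end

theory Submission
  imports Defs
begin

text \<open>The squares of an abelian group A form a subgroup 2A. A subgroup H is a perfect code of
  some CayS(A,T) with T square-free iff every coset x + H other than H contains a non-square: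
  putting one non-square of each such coset into T makes H a perfect code, while a coset of
  squares outside H cannot be dominated by H. Since 2A is a subgroup, this fails precisely when
  H is a proper subgroup of 2A. Here 2A = 0 \<times> {0,2} \<times> A_{2'} because doubling is onto in a
  group of odd order, and a subgroup of 2A either contains (0,2,0), and then is
  0 \<times> {0,2} \<times> A', or lies in 0 \<times> 0 \<times> A_{2'}.\<close>

lemma add_subgroup_0: "add_subgroup H \<Longrightarrow> 0 \<in> H"
  by (simp add: add_subgroup_def)

lemma add_subgroup_add: "add_subgroup H \<Longrightarrow> x \<in> H \<Longrightarrow> y \<in> H \<Longrightarrow> x + y \<in> H"
  by (simp add: add_subgroup_def)

lemma add_subgroup_diff: "add_subgroup H \<Longrightarrow> x \<in> H \<Longrightarrow> y \<in> H \<Longrightarrow> x - y \<in> H"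
  unfolding add_subgroup_def by (metis diff_conv_add_uminus)

lemma add_subgroup_sum_const:
  fixes n :: nat
  shows "add_subgroup H \<Longrightarrow> x \<in> H \<Longrightarrow> (\<Sum>_<n. x) \<in> H"
  by (induction n) (simp_all add: add_subgroup_0 add_subgroup_add)

lemma is_square_add: "is_square x \<Longrightarrow> is_square y \<Longrightarrow> is_square (x + y)"
  unfolding is_square_def by (metis add.assoc add.left_commute)

lemma is_square_minus: "is_square x \<Longrightarrow> is_square (- x)"
  unfolding is_square_def by (metis minus_add_distrib)

lemma is_square_prod_iff: "is_square (a, b) \<longleftrightarrow> is_square a \<and> is_square b"
  unfolding is_square_def by auto

lemma nonsquare_in_coset_if_perfect_code:
  assumes "square_free T" and "perfect_code UNIV (cays_adj T) H" and "x \<notin> H"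
  shows "\<exists>h\<in>H. \<not> is_square (x + h)"
proof -
  obtain c where "c \<in> H" and "x = c \<or> x + c \<in> T"
    using assms(2) unfolding perfect_code_def cays_adj_def by blast
  then show ?thesis using assms(1,3) by blast
qed

lemma perfect_code_coset_representatives:
  assumes sg: "add_subgroup H"
    and r_coset: "\<And>x. x \<notin> H \<Longrightarrow> r x - x \<in> H"
    and r_const: "\<And>x y. x - y \<in> H \<Longrightarrow> r x = r y"
  shows "perfect_code UNIV (cays_adj (r ` (- H))) H"
proof -
  have r_notin: "r x \<notin> H" if "x \<notin> H" for x
  proof
    assume "r x \<in> H"
    then have "r x - (r x - x) \<in> H" using add_subgroup_diff[OF sg _ r_coset[OF that]] by blast
    then have "x \<in> H" by simp
    then show False using that by blast
  qed
  have "\<exists>!c. c \<in> H \<and> (v = c \<or> cays_adj (r ` (- H)) v c)" for v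
  proof (cases "v \<in> H")
    case True
    show ?thesis
    proof (rule ex1I[of _ v])
      fix c assume c: "c \<in> H \<and> (v = c \<or> cays_adj (r ` (- H)) v c)"
      have "v + c \<in> H" using add_subgroup_add[OF sg True] c by blast
      then have "v + c \<notin> r ` (- H)" using r_notin by (metis ComplD imageE)
      then show "c = v" using c unfolding cays_adj_def by blast
    qed (simp add: True)
  next
    case False
    show ?thesis
    proof (rule ex1I[of _ "r v - v"])
      show "r v - v \<in> H \<and> (v = r v - v \<or> cays_adj (r ` (- H)) v (r v - v))"
        using False r_coset[OF False] unfolding cays_adj_def by auto
      fix c assume c: "c \<in> H \<and> (v = c \<or> cays_adj (r ` (- H)) v c)"
      then obtain x where x: "x \<notin> H" and vc: "v + c = r x"
        using False unfolding cays_adj_def by blast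
      have "v - x = (r x - x) - c" using vc by (simp add: algebra_simps)
      then have "r v = r x" using r_const add_subgroup_diff[OF sg r_coset[OF x]] c by metis
      then show "c = r v - v" using vc by (simp add: algebra_simps)
    qed
  qed
  then show ?thesis unfolding perfect_code_def by simp
qed

lemma perfect_code_if_nonsquare_in_cosets:
  assumes sg: "add_subgroup H"
    and nonsquare: "\<And>x. x \<notin> H \<Longrightarrow> \<exists>h\<in>H. \<not> is_square (x + h)"
  shows "\<exists>T. square_free T \<and> perfect_code UNIV (cays_adj T) H"
proof -
  define r where "r x = (SOME t. \<not> is_square t \<and> t - x \<in> H)" for x
  have r: "\<not> is_square (r x) \<and> r x - x \<in> H" if x: "x \<notin> H" for x
  proof -
    obtain h where "h \<in> H" and "\<not> is_square (x + h)" using nonsquare[OF x] by blast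
    then have "\<exists>t. \<not> is_square t \<and> t - x \<in> H" by (intro exI[of _ "x + h"]) simp
    then show ?thesis unfolding r_def by (rule someI_ex)
  qed
  have "r x = r y" if "x - y \<in> H" for x y
  proof -
    have "t - x \<in> H \<longleftrightarrow> t - y \<in> H" for t
      using add_subgroup_add[OF sg _ that] add_subgroup_diff[OF sg _ that]
      by (metis diff_add_cancel diff_diff_eq2)
    then show ?thesis unfolding r_def by simp
  qed
  then have "perfect_code UNIV (cays_adj (r ` (- H))) H"
    using perfect_code_coset_representatives[OF sg] r by blast
  moreover have "square_free (r ` (- H))" using r by auto
  ultimately show ?thesis by blast
qed

lemma subgroup_perfect_code_iff_nonsquare_in_cosets:
  assumes sg: "add_subgroup H"
  shows "subgroup_perfect_code H \<longleftrightarrow> (\<forall>x. x \<notin> H \<longrightarrow> (\<exists>h\<in>H. \<not> is_square (x + h)))"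
  unfolding subgroup_perfect_code_def
  using sg nonsquare_in_coset_if_perfect_code perfect_code_if_nonsquare_in_cosets by metis

lemma subgroup_perfect_code_iff_not_psubset_squares:
  assumes sg: "add_subgroup H"
  shows "subgroup_perfect_code H \<longleftrightarrow> \<not> H \<subset> {x. is_square x}"
  unfolding subgroup_perfect_code_iff_nonsquare_in_cosets[OF sg]
proof
  assume nonsquare: "\<forall>x. x \<notin> H \<longrightarrow> (\<exists>h\<in>H. \<not> is_square (x + h))"
  show "\<not> H \<subset> {x. is_square x}"
  proof
    assume psub: "H \<subset> {x. is_square x}"
    then obtain x where "is_square x" and "x \<notin> H" by blast
    then obtain h where "h \<in> H" and "\<not> is_square (x + h)" using nonsquare by blast
    then show False using psub \<open>is_square x\<close> is_square_add by blast
  qed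
next
  assume not_psubset: "\<not> H \<subset> {x. is_square x}"
  show "\<forall>x. x \<notin> H \<longrightarrow> (\<exists>h\<in>H. \<not> is_square (x + h))"
  proof (intro allI impI)
    fix x assume "x \<notin> H"
    show "\<exists>h\<in>H. \<not> is_square (x + h)"
    proof (rule ccontr)
      assume squares: "\<not> (\<exists>h\<in>H. \<not> is_square (x + h))"
      then have "is_square x" using add_subgroup_0[OF sg] by force
      \<comment> \<open>\<open>H = -x + (x + H)\<close> then consists of squares as well\<close>
      moreover have "is_square h" if "h \<in> H" for h
        using is_square_add[OF is_square_minus[OF \<open>is_square x\<close>]] squares that by force
      ultimately show False using not_psubset \<open>x \<notin> H\<close> by blast
    qed
  qed
qed

lemma add_self_2: "(a::2) + a = 0"
proof -
  have "a + a = 2 * a" by simp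
  also have "(2::2) = 0" by simp
  finally show ?thesis by simp
qed

lemma is_square_vec_2_iff: "is_square (v :: (2, 'n::finite) vec) \<longleftrightarrow> v = 0"
proof -
  have "y + y = 0" for y :: "(2, 'n) vec"
    unfolding vec_eq_iff by (metis add_self_2 vector_add_component zero_index)
  then show ?thesis unfolding is_square_def by (metis add_0)
qed

lemma UNIV_4: "(UNIV :: 4 set) = {0, 1, 2, 3}"
proof -
  have "z \<in> {0, 1, 2, 3}" for z :: 4
  proof (cases z)
    case (of_int k)
    then have "k \<in> {0, 1, 2, 3}" by auto
    then show ?thesis using of_int by auto
  qed
  then show ?thesis by blast
qed

lemma is_square_4_iff: "is_square (z::4) \<longleftrightarrow> z \<in> {0, 2}"
proof -
  have "is_square z \<longleftrightarrow> z \<in> range (\<lambda>y. y + y)"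
    unfolding is_square_def by auto
  also have "range (\<lambda>y. y + y) = {0 + 0, 1 + 1, 2 + 2, 3 + 3 :: 4}"
    by (simp only: UNIV_4 image_insert image_empty)
  also have "\<dots> = {0, 2}"
  proof -
    have "(2::4) + 2 = 0" "(3::4) + 3 = 2" by simp_all
    then show ?thesis by auto
  qed
  finally show ?thesis .
qed

lemma of_nat_odd_mult_2_4:
  assumes "odd n"
  shows "of_nat n * (2::4) = 2"
proof -
  obtain m where "n = 2 * m + 1" using assms oddE by blast
  then have "of_nat n * (2::4) = of_nat m * 4 + 2" by (simp add: algebra_simps)
  also have "(4::4) = 0" by simp
  finally show ?thesis by simp
qed

lemma sum_const_CARD_eq_0: "(\<Sum>_<CARD('a). b) = (0::'a::{ab_group_add, finite})"
proof -
  obtain f where "bij_betw f {..<CARD('a)} (UNIV :: 'a set)"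
    using ex_bij_betw_nat_finite[of "UNIV :: 'a set"] by (auto simp: atLeast0LessThan)
  then have "(\<Sum>_<CARD('a). b) = (\<Sum>_\<in>(UNIV :: 'a set). b)"
    by (rule sum.reindex_bij_betw[where g = "\<lambda>_. b"])
  also have "\<dots> = 0"
  proof -
    have "(\<Sum>x\<in>UNIV. x + b) = (\<Sum>x\<in>(UNIV :: 'a set). x)"
      by (rule sum.reindex_bij_witness[where i = "\<lambda>x. x - b" and j = "\<lambda>x. x + b"]) auto
    then show ?thesis by (simp add: sum.distrib)
  qed
  finally show ?thesis .
qed

lemma sum_const_lessThan_add:
  fixes m n :: nat
  shows "(\<Sum>_<m + n. b) = (\<Sum>_<m. b) + (\<Sum>_<n. b :: 'a::comm_monoid_add)"
  by (induction n) (simp_all add: add.assoc)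

lemma is_square_if_odd_CARD:
  assumes "odd CARD('a)"
  shows "is_square (b::'a::{ab_group_add, finite})"
proof -
  obtain m where m: "CARD('a) = 2 * m + 1" using assms oddE by blast
  have "(\<Sum>_<Suc m. b) + (\<Sum>_<Suc m. b) = (\<Sum>_<Suc m + Suc m. b)"
    by (rule sum_const_lessThan_add[symmetric])
  also have "Suc m + Suc m = Suc (CARD('a))" using m by simp
  also have "(\<Sum>_<Suc (CARD('a)). b) = b" by (simp add: sum_const_CARD_eq_0)
  finally show ?thesis unfolding is_square_def by metis
qed

lemma Collect_is_square_vec_2_4_odd:
  assumes "odd CARD('b)"
  shows "{p :: (2, 'n::finite) vec \<times> 4 \<times> 'b::{ab_group_add, finite}. is_square p} =
    {(v, z, b). v = 0 \<and> z \<in> {0, 2}}"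
  using is_square_if_odd_CARD[OF assms]
  by (auto simp: is_square_prod_iff is_square_vec_2_iff is_square_4_iff)

lemma add_subgroup_slice:
  fixes H :: "('a::ab_group_add \<times> 'b::ab_group_add \<times> 'c::ab_group_add) set"
  assumes "add_subgroup H"
  shows "add_subgroup {c. (0, 0, c) \<in> H}"
proof -
  have "(0, 0, x) + (0, 0, y) = ((0, 0, x + y) :: 'a \<times> 'b \<times> 'c)"
    and "- (0, 0, x) = ((0, 0, - x) :: 'a \<times> 'b \<times> 'c)" and "((0, 0, 0) :: 'a \<times> 'b \<times> 'c) = 0"
    for x y
    by (simp_all add: zero_prod_def)
  then show ?thesis using assms unfolding add_subgroup_def by (metis mem_Collect_eq)
qed

lemma subgroup_of_squares_vec_2_4_cases:
  fixes H :: "((2, 'n::finite) vec \<times> 4 \<times> 'b::{ab_group_add, finite}) set"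
  assumes odd: "odd CARD('b)" and sg: "add_subgroup H"
    and sub: "H \<subseteq> {(v, z, b). v = 0 \<and> z \<in> {0, 2}}"
  defines "A \<equiv> {c. (0, 0, c) \<in> H}"
  shows "H = {(v, z, b). v = 0 \<and> z \<in> {0, 2} \<and> b \<in> A} \<or> H = {(v, z, b). v = 0 \<and> z = 0 \<and> b \<in> A}"
proof (cases "\<exists>b. (0, 2, b) \<in> H")
  case True
  then obtain b where b: "(0, 2, b) \<in> H" by blast
  \<comment> \<open>multiplying by the odd order of \<open>A\<^sub>2\<^sub>'\<close> kills the last component and fixes 2 in \<open>\<int>\<^sub>4\<close>\<close>
  have "(\<Sum>_<CARD('b). (0, 2, b)) = ((0::(2, 'n) vec), 2::4, 0::'b)"
    unfolding sum_prod sum_const_CARD_eq_0 sum_constant card_lessThan of_nat_odd_mult_2_4[OF odd]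
    by simp
  then have two: "(0, 2, 0) \<in> H" using add_subgroup_sum_const[OF sg b] by metis
  have "(0, 2, c) \<in> H \<longleftrightarrow> (0, 0, c) \<in> H" for c
    using add_subgroup_diff[OF sg _ two] add_subgroup_add[OF sg two] by fastforce
  then have "H = {(v, z, b). v = 0 \<and> z \<in> {0, 2} \<and> b \<in> A}"
    using sub unfolding A_def by fastforce
  then show ?thesis ..
next
  case False
  then have "H = {(v, z, b). v = 0 \<and> z = 0 \<and> b \<in> A}"
    using sub unfolding A_def by fastforce
  then show ?thesis ..
qed

lemma psubset_squares_vec_2_4_iff:
  fixes H :: "((2, 'n::finite) vec \<times> 4 \<times> 'b::{ab_group_add, finite}) set"
  assumes "odd CARD('b)" and "add_subgroup H"
  shows "H \<subset> {(v, z, b). v = 0 \<and> z \<in> {0, 2}} \<longleftrightarrow>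
    (\<exists>A'. add_subgroup A' \<and> A' \<noteq> (UNIV :: 'b set) \<and>
            H = {(v, z, b). v = 0 \<and> z \<in> {0, 2} \<and> b \<in> A'}) \<or>
    (\<exists>A''. add_subgroup (A'' :: 'b set) \<and>
            H = {(v, z, b). v = 0 \<and> z = 0 \<and> b \<in> A''})"
    (is "H \<subset> ?S \<longleftrightarrow> ?one_two \<or> ?zero")
proof
  assume psub: "H \<subset> ?S"
  let ?A = "{c. (0, 0, c) \<in> H}"
  have sg_A: "add_subgroup ?A" using add_subgroup_slice[OF assms(2)] .
  have "H \<subseteq> ?S" using psub by (rule psubset_imp_subset)
  from subgroup_of_squares_vec_2_4_cases[OF assms this]
  show "?one_two \<or> ?zero"
  proof
    assume H: "H = {(v, z, b). v = 0 \<and> z \<in> {0, 2} \<and> b \<in> ?A}"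
    have "?A \<noteq> UNIV"
    proof
      assume "?A = UNIV"
      then have "H = ?S" using H by auto
      then show False using psub by simp
    qed
    then show ?thesis by (intro disjI1 exI[of _ ?A] conjI sg_A H)
  next
    assume H: "H = {(v, z, b). v = 0 \<and> z = 0 \<and> b \<in> ?A}"
    show ?thesis by (intro disjI2 exI[of _ ?A] conjI sg_A H)
  qed
next
  assume "?one_two \<or> ?zero"
  then show "H \<subset> ?S"
  proof
    assume ?one_two
    then obtain A' c where c: "c \<notin> A'" and H: "H = {(v, z, b). v = 0 \<and> z \<in> {0, 2} \<and> b \<in> A'}"
      by blast
    have "(0, 0, c) \<in> ?S - H" using c H by simp
    moreover have "H \<subseteq> ?S" using H by auto
    ultimately show ?thesis by blast
  next
    assume ?zero
    then obtain A'' where H: "H = {(v, z, b). v = 0 \<and> z = 0 \<and> b \<in> (A'' :: 'b set)}" by blast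
    have "(0, 2, 0) \<in> ?S - H" using H by simp
    moreover have "H \<subseteq> ?S" using H by auto
    ultimately show ?thesis by blast
  qed
qed

theorem proposition3p11:
  fixes H :: "((2, 'n::finite) vec \<times> 4 \<times> 'b::{ab_group_add, finite}) set"
  assumes "odd CARD('b)"
    and "add_subgroup H"
  shows "subgroup_perfect_code H \<longleftrightarrow>
    \<not> (\<exists>A'. add_subgroup A' \<and> A' \<noteq> (UNIV :: 'b set) \<and>
            H = {(v, z, b). v = 0 \<and> z \<in> {0, 2} \<and> b \<in> A'}) \<and>
    \<not> (\<exists>A''. add_subgroup (A'' :: 'b set) \<and>
            H = {(v, z, b). v = 0 \<and> z = 0 \<and> b \<in> A''})"
  unfolding subgroup_perfect_code_iff_not_psubset_squares[OF assms(2)] Collect_is_square_vec_2_4_odd[OF assms(1)]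
    psubset_squares_vec_2_4_iff[OF assms] by blast

end
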